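(* There is an absolute constant $A>0$ such that for every integer $n\ge1$ and every real $C>0$ there is a smooth function $\rho_C:\mathbb{R}^n\to\mathbb{R}$ such that: (1) $\rho_C\ge0$; (2) $\int_{\mathbb{R}^n}\rho_C(x)\,dx=1$; (3) for every unit vector $v\in\mathbb{R}^n$ and every integer $k\ge0$, $\int_{\mathbb{R}^n}|D_v^k\rho_C(x)|\,dx\le C^k$; (4) for every $D>0$, $\int_{|x|>D}\rho_C(x)\,dx\le A\left(\frac{n}{CD}\right)^2$.
   Context: $D_v^k$ denotes the $k$-th directional derivative in direction $v$; $|x|$ is the Euclidean norm. *)

theory Defs
  imports "HOL-Analysis.Analysis"
begin

text \<open>Euclidean space R^n is represented by extensional functions nat => real
  supported on {..<n}, i.e. the carrier PiE {..<n} (\<lambda>_. UNIV), with Lebesgue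
  measure the n-fold product of lborel. This allows quantifying over n inside
  the statement (the constant A must not depend on n).\<close>

definition Rn :: "nat \<Rightarrow> (nat \<Rightarrow> real) set" where
  "Rn n = PiE {..<n} (\<lambda>_. UNIV)"

definition lebesgue_n :: "nat \<Rightarrow> (nat \<Rightarrow> real) measure" where
  "lebesgue_n n = PiM {..<n} (\<lambda>_. lborel)"

definition euclid_norm :: "nat \<Rightarrow> (nat \<Rightarrow> real) \<Rightarrow> real" where
  "euclid_norm n x = sqrt (\<Sum>i<n. (x i)\<^sup>2)"

fun pd :: "nat list \<Rightarrow> ((nat \<Rightarrow> real) \<Rightarrow> real) \<Rightarrow> (nat \<Rightarrow> real) \<Rightarrow> real" where
  "pd [] f = f"
| "pd (i # is) f = (\<lambda>x. deriv (\<lambda>t. pd is f (x(i := t))) (x i))"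

definition smooth_n :: "nat \<Rightarrow> ((nat \<Rightarrow> real) \<Rightarrow> real) \<Rightarrow> bool" where
  "smooth_n n f \<longleftrightarrow>
     (\<forall>is. set is \<subseteq> {..<n} \<longrightarrow>
        continuous_on (Rn n) (pd is f) \<and>
        (\<forall>i<n. \<forall>x\<in>Rn n.
           ((\<lambda>t. pd is f (x(i := t))) has_real_derivative pd (i # is) f x) (at (x i))))"

definition dir_deriv :: "(nat \<Rightarrow> real) \<Rightarrow> ((nat \<Rightarrow> real) \<Rightarrow> real) \<Rightarrow> (nat \<Rightarrow> real) \<Rightarrow> real" where
  "dir_deriv v f x = deriv (\<lambda>t. f (\<lambda>i. x i + t * v i)) 0"

definition dir_deriv_pow :: "(nat \<Rightarrow> real) \<Rightarrow> nat \<Rightarrow> ((nat \<Rightarrow> real) \<Rightarrow> real) \<Rightarrow> (nat \<Rightarrow> real) \<Rightarrow> real" where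
  "dir_deriv_pow v k f = (dir_deriv v ^^ k) f"

end

theory Submission
  imports Defs
begin

text \<open>
  The density is a tensor product rho(x) = prod_i psi(x_i) of a one-dimensional profile psi,
  so the proof splits into a one-dimensional and an n-dimensional part.

  S j x = integral_0^1 t^j cos(t x + j pi/2) dt is the j-th derivative of
  sin x / x; it is bounded by 1 and decays like 1/x.  The Leibniz rule gives the derivatives of
  H = (S 0)^4, which satisfy |H^(j)(x)| <= 4^j * 100 / (1 + x^2)^2.  Hence all derivatives of H
  are integrable with geometric growth, and H 0 has a finite second moment.  Normalising H 0
  to a probability density Phi and dilating by a factor c yields psi with
  ||psi^(j)||_1 <= (c K0)^j and second moment at most M0 / c^2.

  Partial derivatives of a tensor product act coordinatewise, which gives
  smoothness.  D_v^k of a tensor product expands as a sum over words of length k, and by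
  Tonelli ||D_v^k rho||_1 <= (c K0 sum_i |v_i|)^k <= (c K0 sqrt n)^k for unit v.  Chebyshev's
  inequality bounds the mass outside the ball of radius D by n M0 / (c D)^2.  Choosing
  c = C / (K0 sqrt n) gives the theorem with A = K0^2 M0.
\<close>

text \<open>A derivative tower is a sequence of functions each of which is the derivative of its
  predecessor; F j is thus the j-th derivative of F 0.  All one-dimensional objects of the
  construction are handled in this form, so smoothness never has to be argued separately.\<close>

definition deriv_tower :: "(nat \<Rightarrow> real \<Rightarrow> real) \<Rightarrow> bool" where
  "deriv_tower F \<longleftrightarrow> (\<forall>j x. (F j has_real_derivative F (Suc j) x) (at x))"

lemma deriv_towerI: "(\<And>j x. (F j has_real_derivative F (Suc j) x) (at x)) \<Longrightarrow> deriv_tower F"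
  by (simp add: deriv_tower_def)

lemma deriv_towerD: "deriv_tower F \<Longrightarrow> (F j has_real_derivative F (Suc j) x) (at x)"
  by (simp add: deriv_tower_def)

lemma deriv_tower_continuous: "deriv_tower F \<Longrightarrow> continuous_on UNIV (F j)"
  by (rule DERIV_continuous_on) (rule deriv_towerD)

lemma deriv_tower_measurable: "deriv_tower F \<Longrightarrow> F j \<in> borel_measurable borel"
  by (rule borel_measurable_continuous_onI[OF deriv_tower_continuous])

lemma nn_integral_const_mult:
  assumes "a \<ge> 0" and "(\<lambda>x. ennreal (g x)) \<in> borel_measurable M" and "\<And>x. g x \<ge> 0"
  shows "(\<integral>\<^sup>+x. ennreal (a * g x) \<partial>M) = ennreal a * (\<integral>\<^sup>+x. ennreal (g x) \<partial>M)"
  using assms by (simp add: ennreal_mult nn_integral_cmult)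

text \<open>S j is the j-th derivative of the sinc function S 0 x = sin x / x, written as an integral
  over [0,1] so that differentiation under the integral sign gives the whole tower.\<close>

definition S :: "nat \<Rightarrow> real \<Rightarrow> real" where
  "S j x = integral {0..1} (\<lambda>t. t^j * cos (t*x + real j*pi/2))"

lemma S_integral: "((\<lambda>t. t^j * cos (t*x + real j*pi/2)) has_integral S j x) {0..1}"
  unfolding S_def by (intro integrable_integral integrable_continuous_real continuous_intros)

lemma S_tower: "deriv_tower S"
proof (rule deriv_towerI)
  fix j and x :: real
  have d: "((\<lambda>x. integral (cbox 0 1) (\<lambda>t::real. t^j * cos (t*x + real j*pi/2))) has_field_derivative
        integral (cbox 0 1) (\<lambda>t. t^j * (- sin (t*x + real j*pi/2) * t))) (at x within UNIV)"
  proof (rule leibniz_rule_field_derivative)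
    have "continuous_on UNIV (\<lambda>p::real\<times>real. snd p^j * (- sin (snd p*fst p + real j*pi/2) * snd p))"
      by (intro continuous_intros)
    then show "continuous_on (UNIV \<times> cbox 0 1) (\<lambda>(x, t). t^j * (- sin (t*x + real j*pi/2) * t))"
      unfolding split_beta by (rule continuous_on_subset) auto
  qed (auto intro!: derivative_eq_intros continuous_intros integrable_continuous_real
             simp: cbox_interval)
  have phase: "cos (t*x + real (Suc j)*pi/2) = - sin (t*x + real j*pi/2)" for t
  proof -
    have "t*x + real (Suc j)*pi/2 = (t*x + real j*pi/2) + pi/2"
      by (simp add: algebra_simps add_divide_distrib)
    then show ?thesis by (simp only: cos_add) simp
  qed
  have "(\<lambda>t::real. t^j * (- sin (t*x + real j*pi/2) * t)) = (\<lambda>t. t^Suc j * cos (t*x + real (Suc j)*pi/2))"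
    by (simp add: phase fun_eq_iff del: of_nat_Suc)
  then show "(S j has_real_derivative S (Suc j) x) (at x)"
    using d unfolding S_def[abs_def] cbox_interval by simp
qed

text \<open>Each S j is bounded by 1, and integrating by parts once shows it decays like 1/x;
  together this gives the bound sqrt (10 / (1 + x^2)).\<close>

lemma S_le_1: "\<bar>S j x\<bar> \<le> 1"
proof -
  have "norm (S j x) \<le> 1 * Henstock_Kurzweil_Integration.content (cbox (0::real) 1)"
    by (rule has_integral_bound[OF _ S_integral[unfolded cbox_interval[symmetric]]])
       (auto simp: abs_mult power_le_one intro!: mult_le_one)
  then show ?thesis by simp
qed

lemma S_decay: "\<bar>x * S j x\<bar> \<le> 3"
proof -
  define g where "g t = t^j * sin (t*x + real j*pi/2)" for t
  define a where "a t = real j * t^(j-1) * sin (t*x + real j*pi/2)" for t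
  have dg: "(g has_real_derivative (a t + x * (t^j * cos (t*x + real j*pi/2)))) (at t)" for t
    unfolding g_def a_def by (rule derivative_eq_intros refl | simp add: algebra_simps)+
  have ftc: "((\<lambda>t. a t + x * (t^j * cos (t*x + real j*pi/2))) has_integral (g 1 - g 0)) {0..1}"
    by (rule fundamental_theorem_of_calculus)
       (auto intro!: has_field_derivative_at_within dg simp: has_real_derivative_iff_has_vector_derivative[symmetric])
  have a_int: "(a has_integral integral {0..1} a) {0..1}"
    unfolding a_def by (intro integrable_integral integrable_continuous_real continuous_intros)
  have "((\<lambda>t. x * (t^j * cos (t*x + real j*pi/2))) has_integral (g 1 - g 0 - integral {0..1} a)) {0..1}"
    using has_integral_diff[OF ftc a_int] by simp
  moreover have "((\<lambda>t. x * (t^j * cos (t*x + real j*pi/2))) has_integral x * S j x) {0..1}"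
    using has_integral_mult_right[OF S_integral] by simp
  ultimately have parts: "x * S j x = g 1 - g 0 - integral {0..1} a"
    using has_integral_unique by blast
  have g_ends: "\<bar>g 1\<bar> \<le> 1" "\<bar>g 0\<bar> \<le> 1" unfolding g_def by (simp, cases j, simp_all)
  have dpow: "((\<lambda>t. t^j) has_real_derivative real j * t^(j-1)) (at t)" for t :: real
    by (rule derivative_eq_intros refl | simp)+
  have pow_int: "((\<lambda>t. real j * t^(j-1)) has_integral (1^j - 0^j)) {0..1}"
    by (rule fundamental_theorem_of_calculus)
       (auto intro!: has_field_derivative_at_within dpow simp: has_real_derivative_iff_has_vector_derivative[symmetric])
  have "norm (integral {0..1} a) \<le> integral {0..1} (\<lambda>t. real j * t^(j-1))"
  proof (rule integral_norm_bound_integral)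
    show "a integrable_on {0..1}" using a_int by blast
    show "(\<lambda>t. real j * t^(j-1)) integrable_on {0..1}" using pow_int by blast
    fix t :: real assume t: "t \<in> {0..1}"
    then have "real j * t^(j-1) * \<bar>sin (t*x + real j*pi/2)\<bar> \<le> real j * t^(j-1)"
      by (intro mult_left_le) auto
    then show "norm (a t) \<le> real j * t^(j-1)" using t by (simp add: a_def abs_mult)
  qed
  also have "\<dots> = 1^j - 0^j" using pow_int by (rule integral_unique)
  also have "\<dots> \<le> 1" by simp
  finally have "\<bar>integral {0..1} a\<bar> \<le> 1" by simp
  then show ?thesis unfolding parts using g_ends by linarith
qed

lemma S_bound: "\<bar>S j x\<bar> \<le> sqrt (10 / (1 + x\<^sup>2))"
proof -
  have "(S j x)\<^sup>2 \<le> 1" using power_mono[OF S_le_1[of j x], of 2] by simp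
  moreover have "(x * S j x)\<^sup>2 \<le> 3\<^sup>2" using power_mono[OF S_decay[of x j], of 2] by simp
  then have "x\<^sup>2 * (S j x)\<^sup>2 \<le> 9" by (simp add: power_mult_distrib)
  ultimately have "(S j x)\<^sup>2 * (1 + x\<^sup>2) \<le> 10" by (simp add: algebra_simps)
  then have "(S j x)\<^sup>2 \<le> 10 / (1 + x\<^sup>2)" by (simp add: field_simps add_pos_nonneg)
  then show ?thesis using real_sqrt_le_mono by fastforce
qed

definition leibniz :: "(nat \<Rightarrow> real \<Rightarrow> real) \<Rightarrow> (nat \<Rightarrow> real \<Rightarrow> real) \<Rightarrow> nat \<Rightarrow> real \<Rightarrow> real" where
  "leibniz F G j x = (\<Sum>i=0..j. real (j choose i) * F i x * G (j-i) x)"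

lemma leibniz_0: "leibniz F G 0 x = F 0 x * G 0 x"
  by (simp add: leibniz_def)

lemma leibniz_Suc_eq:
  "leibniz F G (Suc n) x =
     (\<Sum>i=0..n. real (n choose i) * (F (Suc i) x * G (n-i) x + G (Suc (n-i)) x * F i x))"
proof -
  define T where "T i = F i x * G (Suc n - i) x" for i
  have "(\<Sum>i=0..n. real (n choose i) * (G (Suc (n-i)) x * F i x)) = (\<Sum>i=0..Suc n. real (n choose i) * T i)"
    unfolding T_def by (simp add: sum.atLeast0_atMost_Suc Suc_diff_le mult_ac)
  also have "\<dots> = T 0 + (\<Sum>i=0..n. real (n choose Suc i) * T (Suc i))"
    unfolding sum.atLeast0_atMost_Suc_shift by (simp add: o_def)
  finally have B: "(\<Sum>i=0..n. real (n choose i) * (G (Suc (n-i)) x * F i x)) =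
      T 0 + (\<Sum>i=0..n. real (n choose Suc i) * T (Suc i))" .
  have "leibniz F G (Suc n) x = T 0 + (\<Sum>i=0..n. real (Suc n choose Suc i) * T (Suc i))"
    unfolding leibniz_def T_def sum.atLeast0_atMost_Suc_shift by (simp add: o_def mult_ac)
  also have "\<dots> = (\<Sum>i=0..n. real (n choose i) * T (Suc i)) + (T 0 + (\<Sum>i=0..n. real (n choose Suc i) * T (Suc i)))"
    by (simp add: distrib_right sum.distrib)
  finally show ?thesis
    unfolding B[symmetric] by (simp add: T_def distrib_left sum.distrib)
qed

lemma deriv_tower_leibniz:
  assumes "deriv_tower F" and "deriv_tower G"
  shows "deriv_tower (leibniz F G)"
proof (rule deriv_towerI)
  fix n x
  note F = deriv_towerD[OF assms(1)] and G = deriv_towerD[OF assms(2)]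
  show "(leibniz F G n has_real_derivative leibniz F G (Suc n) x) (at x)"
    unfolding leibniz_Suc_eq unfolding leibniz_def[abs_def]
    by (rule derivative_eq_intros F G refl | simp add: algebra_simps)+
qed

lemma leibniz_bound:
  assumes F: "\<And>i x. \<bar>F i x\<bar> \<le> c^i * u x" and G: "\<And>i x. \<bar>G i x\<bar> \<le> d^i * w x"
    and "c \<ge> 0" and "d \<ge> 0"
  shows "\<bar>leibniz F G j x\<bar> \<le> (c+d)^j * (u x * w x)"
proof -
  have "\<bar>leibniz F G j x\<bar> \<le> (\<Sum>i=0..j. \<bar>real (j choose i) * F i x * G (j-i) x\<bar>)"
    unfolding leibniz_def by (rule sum_abs)
  also have "\<dots> \<le> (\<Sum>i=0..j. real (j choose i) * ((c^i * u x) * (d^(j-i) * w x)))"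
  proof (rule sum_mono)
    fix i
    have "\<bar>F i x\<bar> * \<bar>G (j-i) x\<bar> \<le> (c^i * u x) * (d^(j-i) * w x)"
      by (rule mult_mono[OF F G]) (use F[of i x] in auto)
    then show "\<bar>real (j choose i) * F i x * G (j-i) x\<bar> \<le> real (j choose i) * ((c^i * u x) * (d^(j-i) * w x))"
      by (simp add: abs_mult mult.assoc mult_left_mono)
  qed
  also have "\<dots> = (\<Sum>i=0..j. real (j choose i) * c^i * d^(j-i)) * (u x * w x)"
    by (subst sum_distrib_right) (simp add: mult_ac)
  also have "\<dots> = (c+d)^j * (u x * w x)"
    by (simp add: binomial_ring atLeast0AtMost)
  finally show ?thesis .
qed

text \<open>H is the derivative tower of (S 0)^4.  Its derivatives decay like 1/(1+x^2)^2, which makes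
  every derivative integrable and gives H 0 a finite second moment.\<close>

definition H :: "nat \<Rightarrow> real \<Rightarrow> real" where
  "H = leibniz (leibniz S S) (leibniz S S)"

lemma H_tower: "deriv_tower H"
  unfolding H_def by (intro deriv_tower_leibniz S_tower)

lemma H_0: "H 0 x = (S 0 x)^4"
  by (simp add: H_def leibniz_0 eval_nat_numeral)

lemma H_bound: "\<bar>H j x\<bar> \<le> 4^j * (100 / (1 + x\<^sup>2)\<^sup>2)"
proof -
  define w where "w x = sqrt (10 / (1 + x\<^sup>2))" for x :: real
  have ww: "w x * w x = 10 / (1 + x\<^sup>2)" for x
    unfolding w_def by (simp add: add_pos_nonneg)
  have S1: "\<bar>S i x\<bar> \<le> 1^i * w x" for i x using S_bound[of i x] by (simp add: w_def)
  have S2: "\<bar>leibniz S S i x\<bar> \<le> 2^i * (10 / (1 + x\<^sup>2))" for i x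
    using leibniz_bound[of S 1 w S 1 w i x, OF S1 S1] by (simp add: ww)
  have "\<bar>H j x\<bar> \<le> (2+2)^j * ((10 / (1 + x\<^sup>2)) * (10 / (1 + x\<^sup>2)))"
    unfolding H_def by (rule leibniz_bound[OF S2 S2]) auto
  then show ?thesis by (simp add: power2_eq_square)
qed

lemma H_bound_cauchy: "\<bar>H j x\<bar> \<le> 4^j * 100 / (1 + x\<^sup>2)"
proof -
  have pos: "0 < 1 + x\<^sup>2" by (simp add: add_pos_nonneg)
  have "1 + x\<^sup>2 \<le> (1 + x\<^sup>2)\<^sup>2"
    using pos by (simp add: power2_eq_square mult_le_cancel_left1)
  then have "100 / (1 + x\<^sup>2)\<^sup>2 \<le> 100 / (1 + x\<^sup>2)"
    using pos by (intro divide_left_mono) auto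
  then have "4^j * (100 / (1 + x\<^sup>2)\<^sup>2) \<le> 4^j * (100 / (1 + x\<^sup>2))"
    by (intro mult_left_mono) auto
  then show ?thesis using H_bound[of j x] by simp
qed

lemma H_0_moment_bound: "H 0 x * x\<^sup>2 \<le> 100 / (1 + x\<^sup>2)"
proof -
  have "H 0 x * x\<^sup>2 \<le> (100 / (1 + x\<^sup>2)\<^sup>2) * x\<^sup>2"
    using H_bound[of 0 x] by (intro mult_right_mono) auto
  also have "\<dots> = 100 / (1 + x\<^sup>2) * (x\<^sup>2 / (1 + x\<^sup>2))" by (simp add: power2_eq_square)
  also have "\<dots> \<le> 100 / (1 + x\<^sup>2)"
    by (intro mult_left_le) (auto simp: add_pos_nonneg)
  finally show ?thesis .
qed

text \<open>Since S 0 is 1-Lipschitz with S 0 0 = 1, H 0 is at least 1/16 near the origin; this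
  bounds the total mass of H 0 from below.\<close>

lemma H_0_lower: "\<bar>x\<bar> \<le> 1/2 \<Longrightarrow> H 0 x \<ge> 1/16"
proof -
  assume x: "\<bar>x\<bar> \<le> 1/2"
  have "norm (S 0 x - S 0 0) \<le> 1 * norm (x - 0)"
    by (rule field_differentiable_bound[of UNIV _ "S 1"])
       (auto intro: deriv_towerD[OF S_tower] S_le_1)
  moreover have "S 0 0 = 1" by (simp add: S_def)
  ultimately have "1/2 \<le> S 0 x" using x by simp
  then have "(1/2)^4 \<le> (S 0 x)^4" by (intro power_mono) auto
  then show ?thesis by (simp add: H_0 eval_nat_numeral)
qed

lemma nn_integral_cauchy: "(\<integral>\<^sup>+x. ennreal (1 / (1 + x\<^sup>2)) \<partial>lborel) \<le> ennreal pi"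
proof -
  define f where "f x = 1 / (1 + x\<^sup>2)" for x :: real
  have [measurable]: "f \<in> borel_measurable borel" unfolding f_def by measurable
  have right: "(\<integral>\<^sup>+x. ennreal (f x) * indicator {0..} x \<partial>lborel) = ennreal (pi/2)"
  proof -
    have "(\<integral>\<^sup>+x. ennreal (f x) * indicator {0..} x \<partial>lborel) = ennreal (pi/2 - arctan 0)"
      by (rule nn_integral_FTC_atLeast[OF _ _ _ tendsto_arctan_at_top])
         (auto simp: f_def intro!: derivative_eq_intros simp: field_simps power2_eq_square add_nonneg_eq_0_iff)
    then show ?thesis by simp
  qed
  have "(\<integral>\<^sup>+x. ennreal (f x) * indicator {..0} x \<partial>lborel) =
        (\<integral>\<^sup>+x. ennreal (f (0 + (-1) * x)) * indicator {..0} (0 + (-1) * x) \<partial>lborel)"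
    using nn_integral_real_affine[of "\<lambda>x. ennreal (f x) * indicator {..0} x" "-1" 0] by simp
  also have "\<dots> = (\<integral>\<^sup>+x. ennreal (f x) * indicator {0..} x \<partial>lborel)"
    by (intro nn_integral_cong) (auto simp: f_def split: split_indicator)
  finally have left: "(\<integral>\<^sup>+x. ennreal (f x) * indicator {..0} x \<partial>lborel) = ennreal (pi/2)"
    using right by simp
  have "(\<integral>\<^sup>+x. ennreal (f x) \<partial>lborel) \<le>
        (\<integral>\<^sup>+x. ennreal (f x) * indicator {0..} x + ennreal (f x) * indicator {..0} x \<partial>lborel)"
    by (intro nn_integral_mono) (auto split: split_indicator)
  also have "\<dots> = ennreal (pi/2) + ennreal (pi/2)"
    by (subst nn_integral_add) (auto simp: left right)
  also have "\<dots> = ennreal pi" by (simp flip: ennreal_plus)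
  finally show ?thesis by (simp add: f_def)
qed

lemma nn_integral_cauchy_dominated:
  assumes "a \<ge> 0" and "\<And>x. \<bar>g x\<bar> \<le> a / (1 + x\<^sup>2)"
  shows "(\<integral>\<^sup>+x. ennreal \<bar>g x\<bar> \<partial>lborel) \<le> ennreal (a * pi)"
proof -
  have "(\<integral>\<^sup>+x. ennreal \<bar>g x\<bar> \<partial>lborel) \<le> (\<integral>\<^sup>+x. ennreal (a * (1 / (1 + x\<^sup>2))) \<partial>lborel)"
    using assms(2) by (intro nn_integral_mono ennreal_leI) simp
  also have "\<dots> = ennreal a * (\<integral>\<^sup>+x. ennreal (1 / (1 + x\<^sup>2)) \<partial>lborel)"
    using assms(1) by (intro nn_integral_const_mult) (auto simp: add_pos_nonneg)
  also have "\<dots> \<le> ennreal a * ennreal pi"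
    by (intro mult_left_mono nn_integral_cauchy) auto
  finally show ?thesis using assms(1) by (simp add: ennreal_mult)
qed

lemma H_measurable [measurable]: "H j \<in> borel_measurable borel"
  by (rule deriv_tower_measurable[OF H_tower])

lemma H_0_nonneg: "H 0 x \<ge> 0"
  by (simp add: H_0)

lemma H_L1: "(\<integral>\<^sup>+x. ennreal \<bar>H j x\<bar> \<partial>lborel) \<le> ennreal (4^j * 100 * pi)"
  by (rule nn_integral_cauchy_dominated[OF _ H_bound_cauchy]) simp

lemma H_moment: "(\<integral>\<^sup>+x. ennreal (H 0 x * x\<^sup>2) \<partial>lborel) \<le> ennreal (100 * pi)"
  using nn_integral_cauchy_dominated[of 100 "\<lambda>x. H 0 x * x\<^sup>2"] H_0_moment_bound H_0_nonneg
  by simp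

lemma H_mass_lower: "ennreal (1/16) \<le> (\<integral>\<^sup>+x. ennreal (H 0 x) \<partial>lborel)"
proof -
  have "ennreal (1/16) = (\<integral>\<^sup>+x. ennreal (1/16) * indicator {-1/2..1/2::real} x \<partial>lborel)"
    by (simp add: nn_integral_cmult_indicator)
  also have "\<dots> \<le> (\<integral>\<^sup>+x. ennreal (H 0 x) \<partial>lborel)"
    using H_0_lower by (intro nn_integral_mono) (auto split: split_indicator intro: ennreal_leI)
  finally show ?thesis .
qed

definition z0 :: real where
  "z0 = enn2real (\<integral>\<^sup>+x. ennreal (H 0 x) \<partial>lborel)"

lemma H_mass: "(\<integral>\<^sup>+x. ennreal (H 0 x) \<partial>lborel) = ennreal z0" and z0_lower: "z0 \<ge> 1/16"
proof -
  have "(\<integral>\<^sup>+x. ennreal (H 0 x) \<partial>lborel) \<le> ennreal (100 * pi)"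
    using H_L1[of 0] H_0_nonneg by simp
  then have "(\<integral>\<^sup>+x. ennreal (H 0 x) \<partial>lborel) < top"
    using ennreal_less_top order.strict_trans1 by blast
  then show mass: "(\<integral>\<^sup>+x. ennreal (H 0 x) \<partial>lborel) = ennreal z0"
    unfolding z0_def by (simp add: less_top ennreal_enn2real)
  have "0 \<le> z0" unfolding z0_def by simp
  then show "z0 \<ge> 1/16"
    using H_mass_lower unfolding mass by (simp add: ennreal_le_iff)
qed

definition Phi :: "nat \<Rightarrow> real \<Rightarrow> real" where
  "Phi j x = H j x / z0"

text \<open>The constants: M0 = 16 * 100 * pi absorbs the factor 1/z0 <= 16 in the Cauchy-type
  estimates for H, and K0 = 4 * M0 also absorbs the growth 4^j of the derivative bounds.\<close>

definition M0 :: real where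
  "M0 = 1600 * pi"

definition K0 :: real where
  "K0 = 4 * M0"

lemma M0_ge_1: "M0 \<ge> 1"
  unfolding M0_def using pi_gt3 by simp

lemma K0_pos: "K0 > 0"
  using M0_ge_1 by (simp add: K0_def)

lemma Phi_tower: "deriv_tower Phi"
  unfolding Phi_def[abs_def] by (intro deriv_towerI DERIV_cdivide deriv_towerD[OF H_tower])

lemma Phi_nonneg: "Phi 0 x \<ge> 0"
  using z0_lower H_0_nonneg by (simp add: Phi_def)

lemma nn_integral_divide_z0:
  assumes "\<And>x. g x \<ge> 0" and "g \<in> borel_measurable borel"
  shows "(\<integral>\<^sup>+x. ennreal (g x / z0) \<partial>lborel) = ennreal (1/z0) * (\<integral>\<^sup>+x. ennreal (g x) \<partial>lborel)"
  using nn_integral_const_mult[of "1/z0" g lborel] assms z0_lower by simp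

lemma Phi_integral: "(\<integral>\<^sup>+x. ennreal (Phi 0 x) \<partial>lborel) = 1"
  using nn_integral_divide_z0[of "H 0"] H_0_nonneg z0_lower
  by (simp add: Phi_def H_mass ennreal_mult[symmetric])

lemma Phi_L1: "(\<integral>\<^sup>+x. ennreal \<bar>Phi j x\<bar> \<partial>lborel) \<le> ennreal (K0^j)"
proof (cases j)
  case 0
  then show ?thesis using Phi_integral Phi_nonneg by simp
next
  case (Suc m)
  have "(\<integral>\<^sup>+x. ennreal \<bar>Phi j x\<bar> \<partial>lborel) = ennreal (1/z0) * (\<integral>\<^sup>+x. ennreal \<bar>H j x\<bar> \<partial>lborel)"
    using nn_integral_divide_z0[of "\<lambda>x. \<bar>H j x\<bar>"] z0_lower by (simp add: Phi_def)
  also have "\<dots> \<le> ennreal (1/z0) * ennreal (4^j * 100 * pi)"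
    by (intro mult_left_mono H_L1) auto
  also have "\<dots> \<le> ennreal (K0^j)"
  proof -
    have "1/z0 \<le> 16" using z0_lower by (simp add: field_simps)
    then have "1/z0 * (4^j * 100 * pi) \<le> 4^j * M0"
      using mult_right_mono[of "1/z0" 16 "4^j * 100 * pi"] by (simp add: M0_def)
    also have "\<dots> \<le> 4^j * M0^j"
      using M0_ge_1 Suc by (intro mult_left_mono power_increasing[of 1 j M0, simplified]) auto
    finally show ?thesis
      using z0_lower by (simp add: K0_def power_mult_distrib ennreal_mult[symmetric] ennreal_leI)
  qed
  finally show ?thesis .
qed

lemma Phi_moment: "(\<integral>\<^sup>+x. ennreal (Phi 0 x * x\<^sup>2) \<partial>lborel) \<le> ennreal M0"
proof -
  have "(\<integral>\<^sup>+x. ennreal (Phi 0 x * x\<^sup>2) \<partial>lborel) = ennreal (1/z0) * (\<integral>\<^sup>+x. ennreal (H 0 x * x\<^sup>2) \<partial>lborel)"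
    using nn_integral_divide_z0[of "\<lambda>x. H 0 x * x\<^sup>2"] H_0_nonneg by (simp add: Phi_def)
  also have "\<dots> \<le> ennreal (1/z0) * ennreal (100 * pi)"
    by (intro mult_left_mono H_moment) auto
  also have "\<dots> \<le> ennreal M0"
  proof -
    have "1/z0 \<le> 16" using z0_lower by (simp add: field_simps)
    then have "1/z0 * (100 * pi) \<le> M0"
      using mult_right_mono[of "1/z0" 16 "100 * pi"] by (simp add: M0_def)
    then show ?thesis using z0_lower by (simp add: ennreal_mult[symmetric] ennreal_leI)
  qed
  finally show ?thesis .
qed

text \<open>Dilation by a factor c: dilate c F j t = c^(j+1) F j (c t) is the derivative tower of
  c F 0 (c t).\<close>

definition dilate :: "real \<Rightarrow> (nat \<Rightarrow> real \<Rightarrow> real) \<Rightarrow> nat \<Rightarrow> real \<Rightarrow> real" where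
  "dilate c F j t = c^Suc j * F j (c*t)"

lemma deriv_tower_dilate:
  assumes "deriv_tower F"
  shows "deriv_tower (dilate c F)"
proof (rule deriv_towerI)
  fix j t
  have "((\<lambda>t. F j (c*t)) has_real_derivative F (Suc j) (c*t) * c) (at t)"
    by (rule DERIV_chain2[OF deriv_towerD[OF assms]]) (auto intro!: derivative_eq_intros)
  then show "(dilate c F j has_real_derivative dilate c F (Suc j) t) (at t)"
    unfolding dilate_def[abs_def] by (auto intro!: derivative_eq_intros simp: mult_ac)
qed

lemma nn_integral_dilate:
  fixes g :: "real \<Rightarrow> real"
  assumes c: "c > 0" and [measurable]: "g \<in> borel_measurable borel" and "\<And>s. g s \<ge> 0"
  shows "(\<integral>\<^sup>+t. ennreal (c * g (c*t)) \<partial>lborel) = (\<integral>\<^sup>+s. ennreal (g s) \<partial>lborel)"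
proof -
  have "(\<integral>\<^sup>+s. ennreal (g s) \<partial>lborel) = ennreal c * (\<integral>\<^sup>+t. ennreal (g (c*t)) \<partial>lborel)"
    using nn_integral_real_affine[of "\<lambda>s. ennreal (g s)" c 0] c by simp
  also have "\<dots> = (\<integral>\<^sup>+t. ennreal (c * g (c*t)) \<partial>lborel)"
    using c assms(3) by (subst nn_integral_const_mult) auto
  finally show ?thesis by simp
qed

lemma dilate_nonneg: "c > 0 \<Longrightarrow> F j (c*t) \<ge> 0 \<Longrightarrow> dilate c F j t \<ge> 0"
  by (simp add: dilate_def)

lemma dilate_integral:
  assumes "c > 0" and "F 0 \<in> borel_measurable borel" and "\<And>s. F 0 s \<ge> 0"
  shows "(\<integral>\<^sup>+t. ennreal (dilate c F 0 t) \<partial>lborel) = (\<integral>\<^sup>+s. ennreal (F 0 s) \<partial>lborel)"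
  using nn_integral_dilate[of c "F 0"] assms by (simp add: dilate_def)

lemma dilate_L1:
  assumes c: "c > 0" and [measurable]: "F j \<in> borel_measurable borel"
  shows "(\<integral>\<^sup>+t. ennreal \<bar>dilate c F j t\<bar> \<partial>lborel) = ennreal (c^j) * (\<integral>\<^sup>+s. ennreal \<bar>F j s\<bar> \<partial>lborel)"
proof -
  have "(\<integral>\<^sup>+t. ennreal \<bar>dilate c F j t\<bar> \<partial>lborel) = (\<integral>\<^sup>+t. ennreal (c^j * (c * \<bar>F j (c*t)\<bar>)) \<partial>lborel)"
    using c by (simp add: dilate_def abs_mult mult_ac)
  also have "\<dots> = ennreal (c^j) * (\<integral>\<^sup>+t. ennreal (c * \<bar>F j (c*t)\<bar>) \<partial>lborel)"
    using c by (intro nn_integral_const_mult) auto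
  also have "(\<integral>\<^sup>+t. ennreal (c * \<bar>F j (c*t)\<bar>) \<partial>lborel) = (\<integral>\<^sup>+s. ennreal \<bar>F j s\<bar> \<partial>lborel)"
    using nn_integral_dilate[of c "\<lambda>s. \<bar>F j s\<bar>"] c by simp
  finally show ?thesis .
qed

lemma dilate_moment:
  assumes c: "c > 0" and [measurable]: "F 0 \<in> borel_measurable borel" and F_nonneg: "\<And>s. F 0 s \<ge> 0"
  shows "(\<integral>\<^sup>+t. ennreal (dilate c F 0 t * t\<^sup>2) \<partial>lborel) =
    ennreal (1/c\<^sup>2) * (\<integral>\<^sup>+s. ennreal (F 0 s * s\<^sup>2) \<partial>lborel)"
proof -
  have "dilate c F 0 t * t\<^sup>2 = 1/c\<^sup>2 * (c * (F 0 (c*t) * (c*t)\<^sup>2))" for t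
    using c by (simp add: dilate_def field_simps power2_eq_square)
  then have "(\<integral>\<^sup>+t. ennreal (dilate c F 0 t * t\<^sup>2) \<partial>lborel) =
      ennreal (1/c\<^sup>2) * (\<integral>\<^sup>+t. ennreal (c * (F 0 (c*t) * (c*t)\<^sup>2)) \<partial>lborel)"
    using c F_nonneg by (simp only:) (intro nn_integral_const_mult; simp)
  also have "(\<integral>\<^sup>+t. ennreal (c * (F 0 (c*t) * (c*t)\<^sup>2)) \<partial>lborel) = (\<integral>\<^sup>+s. ennreal (F 0 s * s\<^sup>2) \<partial>lborel)"
    using nn_integral_dilate[of c "\<lambda>s. F 0 s * s\<^sup>2"] c F_nonneg by simp
  finally show ?thesis .
qed

lemma profile_tower: "deriv_tower (dilate c Phi)"
  by (rule deriv_tower_dilate[OF Phi_tower])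

lemma profile_nonneg: "c > 0 \<Longrightarrow> dilate c Phi 0 t \<ge> 0"
  by (simp add: dilate_nonneg Phi_nonneg)

lemma profile_integral: "c > 0 \<Longrightarrow> (\<integral>\<^sup>+t. ennreal (dilate c Phi 0 t) \<partial>lborel) = 1"
  using dilate_integral[of c Phi] deriv_tower_measurable[OF Phi_tower] Phi_nonneg Phi_integral
  by simp

lemma profile_L1:
  assumes "c > 0"
  shows "(\<integral>\<^sup>+t. ennreal \<bar>dilate c Phi j t\<bar> \<partial>lborel) \<le> ennreal ((c * K0)^j)"
proof -
  have "(\<integral>\<^sup>+t. ennreal \<bar>dilate c Phi j t\<bar> \<partial>lborel) \<le> ennreal (c^j) * ennreal (K0^j)"
    using assms deriv_tower_measurable[OF Phi_tower]
    by (simp add: dilate_L1 mult_left_mono Phi_L1)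
  then show ?thesis
    using assms K0_pos by (simp add: ennreal_mult[symmetric] power_mult_distrib)
qed

lemma profile_moment:
  assumes "c > 0"
  shows "(\<integral>\<^sup>+t. ennreal (dilate c Phi 0 t * t\<^sup>2) \<partial>lborel) \<le> ennreal (M0 / c\<^sup>2)"
proof -
  have "(\<integral>\<^sup>+t. ennreal (dilate c Phi 0 t * t\<^sup>2) \<partial>lborel) \<le> ennreal (1/c\<^sup>2) * ennreal M0"
    using assms deriv_tower_measurable[OF Phi_tower] Phi_nonneg
    by (simp add: dilate_moment mult_left_mono Phi_moment)
  then show ?thesis
    using assms M0_ge_1 by (simp add: ennreal_mult[symmetric])
qed

definition tensor :: "(nat \<Rightarrow> real \<Rightarrow> real) \<Rightarrow> nat \<Rightarrow> (nat \<Rightarrow> nat) \<Rightarrow> (nat \<Rightarrow> real) \<Rightarrow> real" where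
  "tensor F n \<alpha> x = (\<Prod>j<n. F (\<alpha> j) (x j))"

lemma tensor_split:
  "i < n \<Longrightarrow> tensor F n \<alpha> x = F (\<alpha> i) (x i) * (\<Prod>j\<in>{..<n}-{i}. F (\<alpha> j) (x j))"
  unfolding tensor_def by (subst prod.remove[of _ i]) auto

lemma tensor_coordinate_deriv:
  assumes F: "deriv_tower F" and i: "i < n"
  shows "((\<lambda>t. tensor F n \<alpha> (x(i:=t))) has_real_derivative
           tensor F n (\<alpha>(i := Suc (\<alpha> i))) (x(i:=t0))) (at t0)"
proof -
  define R where "R = (\<Prod>j\<in>{..<n}-{i}. F (\<alpha> j) (x j))"
  have "tensor F n \<alpha> (x(i:=t)) = F (\<alpha> i) t * R" for t
    unfolding tensor_split[OF i] R_def by (auto intro!: prod.cong)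
  moreover have "tensor F n (\<alpha>(i := Suc (\<alpha> i))) (x(i:=t0)) = F (Suc (\<alpha> i)) t0 * R"
    unfolding tensor_split[OF i] R_def by (auto intro!: prod.cong)
  ultimately show ?thesis
    by (simp only:) (intro DERIV_cmult_right deriv_towerD[OF F])
qed

lemma count_list_Cons_fun: "count_list (i # is) = (count_list is)(i := Suc (count_list is i))"
  by (rule ext) auto

lemma pd_tensor:
  assumes F: "deriv_tower F"
  shows "set is \<subseteq> {..<n} \<Longrightarrow> pd is (tensor F n (\<lambda>_. 0)) = tensor F n (count_list is)"
proof (induction "is")
  case Nil
  have "(\<lambda>_. 0::nat) = count_list []" by (rule ext) simp
  then show ?case by simp
next
  case (Cons i "is")
  then have i: "i < n" and IH: "pd is (tensor F n (\<lambda>_. 0)) = tensor F n (count_list is)" by auto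
  show ?case
  proof (rule ext)
    fix x
    have "pd (i # is) (tensor F n (\<lambda>_. 0)) x = deriv (\<lambda>t. tensor F n (count_list is) (x(i:=t))) (x i)"
      by (simp add: IH)
    also have "\<dots> = tensor F n (count_list (i # is)) (x(i := x i))"
      unfolding count_list_Cons_fun by (rule DERIV_imp_deriv[OF tensor_coordinate_deriv[OF F i]])
    finally show "pd (i # is) (tensor F n (\<lambda>_. 0)) x = tensor F n (count_list (i # is)) x" by simp
  qed
qed

lemma tensor_continuous:
  assumes "deriv_tower F"
  shows "continuous_on UNIV (tensor F n \<alpha>)"
proof -
  have "continuous_on UNIV (\<lambda>x. F (\<alpha> j) (x j))" for j
    by (rule continuous_on_compose2[OF deriv_tower_continuous[OF assms] continuous_on_product_coordinates]) auto
  then show ?thesis unfolding tensor_def[abs_def] by (intro continuous_intros)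
qed

lemma smooth_tensor:
  assumes F: "deriv_tower F"
  shows "smooth_n n (tensor F n (\<lambda>_. 0))"
  unfolding smooth_n_def
proof (intro allI impI conjI ballI)
  fix "is" assume "is": "set is \<subseteq> {..<n}"
  then show "continuous_on (Rn n) (pd is (tensor F n (\<lambda>_. 0)))"
    by (simp add: pd_tensor[OF F] continuous_on_subset[OF tensor_continuous[OF F]])
  fix i x assume i: "i < n"
  then have "set (i # is) \<subseteq> {..<n}" using "is" by auto
  then show "((\<lambda>t. pd is (tensor F n (\<lambda>_. 0)) (x(i := t))) has_real_derivative
               pd (i # is) (tensor F n (\<lambda>_. 0)) x) (at (x i))"
    using tensor_coordinate_deriv[OF F i, of "count_list is" x "x i"] "is"
    by (simp only: pd_tensor[OF F] count_list_Cons_fun fun_upd_triv)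
qed

lemma tensor_line_deriv:
  assumes F: "deriv_tower F"
  shows "((\<lambda>t. tensor F n \<alpha> (\<lambda>i. x i + t * v i)) has_real_derivative
     (\<Sum>i<n. v i * tensor F n (\<alpha>(i := Suc (\<alpha> i))) (\<lambda>i. x i + t * v i))) (at t)"
proof -
  define y where "y = (\<lambda>i. x i + t * v i)"
  have d: "((\<lambda>t. F (\<alpha> j) (x j + t * v j)) has_real_derivative F (Suc (\<alpha> j)) (y j) * v j) (at t)" for j
    unfolding y_def by (rule DERIV_chain2[OF deriv_towerD[OF F]]) (auto intro!: derivative_eq_intros)
  have "F (Suc (\<alpha> j)) (y j) * v j * (\<Prod>l\<in>{..<n}-{j}. F (\<alpha> l) (y l)) =
        v j * tensor F n (\<alpha>(j := Suc (\<alpha> j))) y" if "j \<in> {..<n}" for j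
    using that by (simp add: tensor_split[of j n])
  then have "(\<Sum>j<n. F (Suc (\<alpha> j)) (y j) * v j * (\<Prod>l\<in>{..<n}-{j}. F (\<alpha> l) (y l))) =
      (\<Sum>j<n. v j * tensor F n (\<alpha>(j := Suc (\<alpha> j))) y)"
    by (rule sum.cong[OF refl])
  moreover have "((\<lambda>t. \<Prod>j<n. F (\<alpha> j) (x j + t * v j)) has_real_derivative
      (\<Sum>j<n. F (Suc (\<alpha> j)) (y j) * v j * (\<Prod>l\<in>{..<n}-{j}. F (\<alpha> l) (y l)))) (at t)"
    unfolding y_def by (rule has_field_derivative_prod) (rule d[unfolded y_def])
  ultimately show ?thesis by (simp add: tensor_def y_def)
qed

definition words :: "nat \<Rightarrow> nat \<Rightarrow> nat list set" where
  "words n k = {xs. set xs \<subseteq> {..<n} \<and> length xs = k}"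

lemma words_0: "words n 0 = {[]}"
  unfolding words_def by auto

lemma sum_words_Suc: "(\<Sum>ys\<in>words n (Suc k). g ys) = (\<Sum>xs\<in>words n k. \<Sum>i<n. g (i # xs))"
proof -
  have inj: "inj_on (\<lambda>(xs, i). i # xs) (words n k \<times> {..<n})"
    by (auto simp: inj_on_def)
  have "words n (Suc k) = (\<lambda>(xs, i). i # xs) ` (words n k \<times> {..<n})"
    unfolding words_def by (rule lists_length_Suc_eq)
  then have "(\<Sum>ys\<in>words n (Suc k). g ys) = (\<Sum>p\<in>words n k \<times> {..<n}. g ((\<lambda>(xs, i). i # xs) p))"
    by (simp add: sum.reindex[OF inj])
  also have "\<dots> = (\<Sum>xs\<in>words n k. \<Sum>i<n. g (i # xs))"
    by (subst sum.cartesian_product) (simp add: split_beta)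
  finally show ?thesis .
qed

lemma sum_words_prod_list: "(\<Sum>xs\<in>words n k. prod_list (map f xs)) = (\<Sum>i<n. f i)^k"
  for f :: "nat \<Rightarrow> real"
proof (induction k)
  case 0
  then show ?case by (simp add: words_0)
next
  case (Suc k)
  have "(\<Sum>xs\<in>words n (Suc k). prod_list (map f xs)) = (\<Sum>xs\<in>words n k. \<Sum>i<n. f i * prod_list (map f xs))"
    by (simp add: sum_words_Suc)
  also have "\<dots> = (\<Sum>i<n. f i) * (\<Sum>xs\<in>words n k. prod_list (map f xs))"
    by (simp add: sum_distrib_left sum_distrib_right)
  finally show ?case using Suc by simp
qed

definition dir_expansion ::
    "(nat \<Rightarrow> real \<Rightarrow> real) \<Rightarrow> nat \<Rightarrow> (nat \<Rightarrow> real) \<Rightarrow> nat \<Rightarrow> (nat \<Rightarrow> real) \<Rightarrow> real" where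
  "dir_expansion F n v k x = (\<Sum>xs\<in>words n k. prod_list (map v xs) * tensor F n (count_list xs) x)"

lemma dir_deriv_dir_expansion:
  assumes F: "deriv_tower F"
  shows "dir_deriv v (dir_expansion F n v k) x = dir_expansion F n v (Suc k) x"
proof -
  have "((\<lambda>t. dir_expansion F n v k (\<lambda>i. x i + t * v i)) has_real_derivative
     (\<Sum>xs\<in>words n k. prod_list (map v xs) *
        (\<Sum>i<n. v i * tensor F n ((count_list xs)(i := Suc (count_list xs i))) (\<lambda>i. x i + 0 * v i)))) (at 0)"
    unfolding dir_expansion_def by (intro DERIV_sum DERIV_cmult tensor_line_deriv[OF F])
  then have "dir_deriv v (dir_expansion F n v k) x =
     (\<Sum>xs\<in>words n k. \<Sum>i<n. prod_list (map v (i # xs)) * tensor F n (count_list (i # xs)) x)"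
    unfolding dir_deriv_def
    by (subst DERIV_imp_deriv) (auto simp: count_list_Cons_fun sum_distrib_left mult_ac)
  also have "\<dots> = dir_expansion F n v (Suc k) x"
    unfolding dir_expansion_def by (rule sum_words_Suc[symmetric])
  finally show ?thesis .
qed

lemma dir_deriv_pow_tensor:
  assumes "deriv_tower F"
  shows "dir_deriv_pow v k (tensor F n (\<lambda>_. 0)) = dir_expansion F n v k"
proof (induction k)
  case 0
  have empty: "count_list [] = (\<lambda>_. 0::nat)" by (rule ext) simp
  show ?case by (simp add: dir_deriv_pow_def dir_expansion_def words_0 empty)
next
  case (Suc k)
  then show ?case
    by (auto simp: dir_deriv_pow_def dir_deriv_dir_expansion[OF assms])
qed

interpretation lborel_product: product_sigma_finite "\<lambda>_::nat. lborel :: real measure"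
  by standard

lemma nn_integral_lebesgue_n_prod:
  assumes "\<And>j. g j \<in> borel_measurable borel" and "\<And>j t. g j t \<ge> 0"
  shows "(\<integral>\<^sup>+x. ennreal (\<Prod>j<n. g j (x j)) \<partial>lebesgue_n n) = (\<Prod>j<n. \<integral>\<^sup>+t. ennreal (g j t) \<partial>lborel)"
proof -
  have "(\<integral>\<^sup>+x. ennreal (\<Prod>j<n. g j (x j)) \<partial>lebesgue_n n) =
        (\<integral>\<^sup>+x. (\<Prod>j<n. ennreal (g j (x j))) \<partial>lebesgue_n n)"
    using assms(2) by (simp add: prod_ennreal)
  also have "\<dots> = (\<Prod>j<n. \<integral>\<^sup>+t. ennreal (g j t) \<partial>lborel)"
    unfolding lebesgue_n_def
    by (rule lborel_product.product_nn_integral_prod[of "{..<n}" "\<lambda>j t. ennreal (g j t)", simplified])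
       (use assms(1) in measurable)
  finally show ?thesis .
qed

lemma tensor_measurable:
  assumes "deriv_tower F"
  shows "tensor F n \<alpha> \<in> borel_measurable (lebesgue_n n)"
proof -
  note [measurable] = deriv_tower_measurable[OF assms]
  show ?thesis unfolding tensor_def[abs_def] lebesgue_n_def by measurable
qed

lemma tensor_L1:
  assumes F: "deriv_tower F" and "K \<ge> 0"
    and F_L1: "\<And>j. (\<integral>\<^sup>+t. ennreal \<bar>F j t\<bar> \<partial>lborel) \<le> ennreal (K^j)"
  shows "(\<integral>\<^sup>+x. ennreal \<bar>tensor F n \<alpha> x\<bar> \<partial>lebesgue_n n) \<le> ennreal (K^(\<Sum>j<n. \<alpha> j))"
proof -
  have "(\<integral>\<^sup>+x. ennreal \<bar>tensor F n \<alpha> x\<bar> \<partial>lebesgue_n n) =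
        (\<integral>\<^sup>+x. ennreal (\<Prod>j<n. \<bar>F (\<alpha> j) (x j)\<bar>) \<partial>lebesgue_n n)"
    by (simp add: tensor_def abs_prod)
  also have "\<dots> = (\<Prod>j<n. \<integral>\<^sup>+t. ennreal \<bar>F (\<alpha> j) t\<bar> \<partial>lborel)"
    using deriv_tower_measurable[OF F] by (intro nn_integral_lebesgue_n_prod) auto
  also have "\<dots> \<le> (\<Prod>j<n. ennreal (K^(\<alpha> j)))"
    by (intro prod_mono_ennreal F_L1)
  also have "\<dots> = ennreal (K^(\<Sum>j<n. \<alpha> j))"
    using \<open>K \<ge> 0\<close> by (simp add: prod_ennreal power_sum)
  finally show ?thesis .
qed

lemma dir_deriv_pow_tensor_L1:
  assumes F: "deriv_tower F" and K: "K \<ge> 0"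
    and F_L1: "\<And>j. (\<integral>\<^sup>+t. ennreal \<bar>F j t\<bar> \<partial>lborel) \<le> ennreal (K^j)"
  shows "(\<integral>\<^sup>+x. ennreal \<bar>dir_deriv_pow v k (tensor F n (\<lambda>_. 0)) x\<bar> \<partial>lebesgue_n n)
           \<le> ennreal ((K * (\<Sum>i<n. \<bar>v i\<bar>))^k)"
proof -
  have abs_prod_list: "\<bar>prod_list (map v xs)\<bar> = prod_list (map (\<lambda>i. \<bar>v i\<bar>) xs)" for xs
    by (induction xs) (auto simp: abs_mult)
  have "(\<integral>\<^sup>+x. ennreal \<bar>dir_expansion F n v k x\<bar> \<partial>lebesgue_n n) \<le>
        (\<integral>\<^sup>+x. (\<Sum>xs\<in>words n k. ennreal \<bar>prod_list (map v xs)\<bar> *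
                                   ennreal \<bar>tensor F n (count_list xs) x\<bar>) \<partial>lebesgue_n n)"
  proof (intro nn_integral_mono)
    fix x
    have "\<bar>dir_expansion F n v k x\<bar> \<le>
          (\<Sum>xs\<in>words n k. \<bar>prod_list (map v xs)\<bar> * \<bar>tensor F n (count_list xs) x\<bar>)"
      unfolding dir_expansion_def by (rule order_trans[OF sum_abs]) (simp add: abs_mult)
    then show "ennreal \<bar>dir_expansion F n v k x\<bar> \<le> (\<Sum>xs\<in>words n k.
                 ennreal \<bar>prod_list (map v xs)\<bar> * ennreal \<bar>tensor F n (count_list xs) x\<bar>)"
      by (simp add: ennreal_mult[symmetric] ennreal_leI)
  qed
  also have "\<dots> = (\<Sum>xs\<in>words n k. ennreal \<bar>prod_list (map v xs)\<bar> *
                    (\<integral>\<^sup>+x. ennreal \<bar>tensor F n (count_list xs) x\<bar> \<partial>lebesgue_n n))"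
    using tensor_measurable[OF F] by (subst nn_integral_sum) (auto simp: nn_integral_cmult)
  also have "\<dots> \<le> (\<Sum>xs\<in>words n k. ennreal \<bar>prod_list (map v xs)\<bar> * ennreal (K^k))"
  proof (intro sum_mono mult_left_mono)
    fix xs assume "xs \<in> words n k"
    then have "(\<Sum>j<n. count_list xs j) = k" unfolding words_def by (auto intro: sum_count_set)
    then show "(\<integral>\<^sup>+x. ennreal \<bar>tensor F n (count_list xs) x\<bar> \<partial>lebesgue_n n) \<le> ennreal (K^k)"
      using tensor_L1[OF F K F_L1, of n "count_list xs"] by simp
  qed simp
  also have "\<dots> = ennreal ((\<Sum>xs\<in>words n k. prod_list (map (\<lambda>i. \<bar>v i\<bar>) xs)) * K^k)"
  proof -
    have "0 \<le> prod_list (map (\<lambda>i. \<bar>v i\<bar>) xs)" for xs by (rule prod_list_nonneg) auto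
    then show ?thesis using K by (simp add: abs_prod_list ennreal_mult[symmetric] sum_distrib_right)
  qed
  also have "\<dots> = ennreal ((K * (\<Sum>i<n. \<bar>v i\<bar>))^k)"
    by (simp add: sum_words_prod_list power_mult_distrib mult_ac)
  finally show ?thesis by (simp add: dir_deriv_pow_tensor[OF F])
qed

lemma sum_abs_le_sqrt_card:
  assumes "(\<Sum>i<n. (v i)\<^sup>2) = (1::real)"
  shows "(\<Sum>i<n. \<bar>v i\<bar>) \<le> sqrt (real n)"
proof -
  have "(\<Sum>i<n. \<bar>v i\<bar> * 1)\<^sup>2 \<le> (\<Sum>i<n. \<bar>v i\<bar>\<^sup>2) * (\<Sum>i<n. 1\<^sup>2)"
    by (rule Cauchy_Schwarz_ineq_sum)
  then have "(\<Sum>i<n. \<bar>v i\<bar>)\<^sup>2 \<le> real n" using assms by simp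
  then show ?thesis by (rule real_le_rsqrt)
qed

lemma dir_deriv_pow_tensor_L1_unit:
  assumes F: "deriv_tower F" and K: "K \<ge> 0"
    and F_L1: "\<And>j. (\<integral>\<^sup>+t. ennreal \<bar>F j t\<bar> \<partial>lborel) \<le> ennreal (K^j)"
    and v: "euclid_norm n v = 1"
  shows "(\<integral>\<^sup>+x. ennreal \<bar>dir_deriv_pow v k (tensor F n (\<lambda>_. 0)) x\<bar> \<partial>lebesgue_n n)
           \<le> ennreal ((K * sqrt (real n))^k)"
proof -
  have "(\<Sum>i<n. (v i)\<^sup>2) = 1" using v unfolding euclid_norm_def by simp
  then have "(K * (\<Sum>i<n. \<bar>v i\<bar>))^k \<le> (K * sqrt (real n))^k"
    using K by (intro power_mono mult_left_mono sum_abs_le_sqrt_card) (auto intro: sum_nonneg)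
  then show ?thesis
    using dir_deriv_pow_tensor_L1[OF F K F_L1] order_trans ennreal_leI by blast
qed

lemma tensor_integral:
  assumes "F 0 \<in> borel_measurable borel" and "\<And>t. F 0 t \<ge> 0"
    and "(\<integral>\<^sup>+t. ennreal (F 0 t) \<partial>lborel) = 1"
  shows "(\<integral>\<^sup>+x. ennreal (tensor F n (\<lambda>_. 0) x) \<partial>lebesgue_n n) = 1"
  using nn_integral_lebesgue_n_prod[of "\<lambda>_. F 0" n] assms by (simp add: tensor_def)

lemma tensor_moment:
  assumes [measurable]: "F 0 \<in> borel_measurable borel" and nonneg: "\<And>t. F 0 t \<ge> 0"
    and mass: "(\<integral>\<^sup>+t. ennreal (F 0 t) \<partial>lborel) = 1"
    and moment: "(\<integral>\<^sup>+t. ennreal (F 0 t * t\<^sup>2) \<partial>lborel) \<le> ennreal m"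
    and i: "i < n"
  shows "(\<integral>\<^sup>+x. ennreal (tensor F n (\<lambda>_. 0) x * (x i)\<^sup>2) \<partial>lebesgue_n n) \<le> ennreal m"
proof -
  define g where "g j t = (if j = i then F 0 t * t\<^sup>2 else F 0 t)" for j t
  have rest: "(\<Prod>j\<in>{..<n}-{i}. g j (x j)) = (\<Prod>j\<in>{..<n}-{i}. F 0 (x j))" for x
    by (intro prod.cong) (auto simp: g_def)
  have "tensor F n (\<lambda>_. 0) x * (x i)\<^sup>2 = (\<Prod>j<n. g j (x j))" for x
    using i by (simp add: tensor_split prod.remove[of "{..<n}" i] rest g_def)
  moreover have "(\<integral>\<^sup>+x. ennreal (\<Prod>j<n. g j (x j)) \<partial>lebesgue_n n) = (\<Prod>j<n. \<integral>\<^sup>+t. ennreal (g j t) \<partial>lborel)"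
    using nonneg by (intro nn_integral_lebesgue_n_prod) (auto simp: g_def)
  moreover have "(\<Prod>j\<in>{..<n}-{i}. \<integral>\<^sup>+t. ennreal (g j t) \<partial>lborel) = 1"
    by (intro prod.neutral) (auto simp: g_def mass)
  then have "(\<Prod>j<n. \<integral>\<^sup>+t. ennreal (g j t) \<partial>lborel) = (\<integral>\<^sup>+t. ennreal (F 0 t * t\<^sup>2) \<partial>lborel)"
    using i by (simp add: prod.remove[of "{..<n}" i] g_def)
  ultimately show ?thesis using moment by simp
qed

lemma tail_le_second_moments:
  assumes D: "D > 0" and nonneg: "\<And>x. f x \<ge> 0"
    and meas: "\<And>i. i < n \<Longrightarrow> (\<lambda>x. ennreal (f x * (x i)\<^sup>2)) \<in> borel_measurable M"
  shows "(\<integral>\<^sup>+x. ennreal (f x) * indicator {y. euclid_norm n y > D} x \<partial>M)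
           \<le> ennreal (1/D\<^sup>2) * (\<Sum>i<n. \<integral>\<^sup>+x. ennreal (f x * (x i)\<^sup>2) \<partial>M)"
proof -
  have pointwise: "ennreal (f x) * indicator {y. euclid_norm n y > D} x
      \<le> ennreal (1/D\<^sup>2) * (\<Sum>i<n. ennreal (f x * (x i)\<^sup>2))" for x
  proof (cases "euclid_norm n x > D")
    case True
    have "D\<^sup>2 < (sqrt (\<Sum>i<n. (x i)\<^sup>2))\<^sup>2"
      using True D unfolding euclid_norm_def by (intro power_strict_mono) auto
    then have "D\<^sup>2 < (\<Sum>i<n. (x i)\<^sup>2)" by (simp add: sum_nonneg)
    then have "1 \<le> (\<Sum>i<n. (x i)\<^sup>2) / D\<^sup>2" using D by simp
    then have "f x * 1 \<le> f x * ((\<Sum>i<n. (x i)\<^sup>2) / D\<^sup>2)"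
      using nonneg[of x] by (rule mult_left_mono)
    then have "f x \<le> f x * ((\<Sum>i<n. (x i)\<^sup>2) / D\<^sup>2)" by simp
    also have "\<dots> = 1/D\<^sup>2 * (\<Sum>i<n. f x * (x i)\<^sup>2)"
      by (simp add: sum_distrib_left sum_divide_distrib)
    finally have "ennreal (f x) \<le> ennreal (1/D\<^sup>2 * (\<Sum>i<n. f x * (x i)\<^sup>2))"
      by (rule ennreal_leI)
    also have "\<dots> = ennreal (1/D\<^sup>2) * ennreal (\<Sum>i<n. f x * (x i)\<^sup>2)"
      using nonneg[of x] by (intro ennreal_mult) (auto intro: sum_nonneg)
    also have "ennreal (\<Sum>i<n. f x * (x i)\<^sup>2) = (\<Sum>i<n. ennreal (f x * (x i)\<^sup>2))"
      using nonneg[of x] by (intro sum_ennreal[symmetric]) simp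
    finally show ?thesis using True by simp
  qed simp
  have "(\<integral>\<^sup>+x. ennreal (f x) * indicator {y. euclid_norm n y > D} x \<partial>M)
      \<le> (\<integral>\<^sup>+x. ennreal (1/D\<^sup>2) * (\<Sum>i<n. ennreal (f x * (x i)\<^sup>2)) \<partial>M)"
    by (intro nn_integral_mono pointwise)
  also have "\<dots> = ennreal (1/D\<^sup>2) * (\<integral>\<^sup>+x. (\<Sum>i<n. ennreal (f x * (x i)\<^sup>2)) \<partial>M)"
    using meas by (intro nn_integral_cmult borel_measurable_sum) auto
  also have "(\<integral>\<^sup>+x. (\<Sum>i<n. ennreal (f x * (x i)\<^sup>2)) \<partial>M) = (\<Sum>i<n. \<integral>\<^sup>+x. ennreal (f x * (x i)\<^sup>2) \<partial>M)"
    using meas by (intro nn_integral_sum) auto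
  finally show ?thesis .
qed

lemma tensor_tail:
  assumes F: "deriv_tower F" and nonneg: "\<And>t. F 0 t \<ge> 0"
    and mass: "(\<integral>\<^sup>+t. ennreal (F 0 t) \<partial>lborel) = 1"
    and moment: "(\<integral>\<^sup>+t. ennreal (F 0 t * t\<^sup>2) \<partial>lborel) \<le> ennreal m"
    and "m \<ge> 0" and "D > 0"
  shows "(\<integral>\<^sup>+x. ennreal (tensor F n (\<lambda>_. 0) x) * indicator {y. euclid_norm n y > D} x \<partial>lebesgue_n n)
           \<le> ennreal (real n * m / D\<^sup>2)"
proof -
  have meas: "(\<lambda>x. ennreal (tensor F n (\<lambda>_. 0) x * (x i)\<^sup>2)) \<in> borel_measurable (lebesgue_n n)"
    if "i < n" for i
  proof -
    note [measurable] = tensor_measurable[OF F]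
    have [measurable]: "(\<lambda>x. x i) \<in> borel_measurable (lebesgue_n n)"
      using measurable_component_singleton[of i "{..<n}" "\<lambda>_. lborel"] that
      unfolding lebesgue_n_def measurable_lborel1 by auto
    show ?thesis by measurable
  qed
  have "(\<integral>\<^sup>+x. ennreal (tensor F n (\<lambda>_. 0) x) * indicator {y. euclid_norm n y > D} x \<partial>lebesgue_n n)
      \<le> ennreal (1/D\<^sup>2) * (\<Sum>i<n. \<integral>\<^sup>+x. ennreal (tensor F n (\<lambda>_. 0) x * (x i)\<^sup>2) \<partial>lebesgue_n n)"
    using nonneg \<open>D > 0\<close> meas by (intro tail_le_second_moments) (auto simp: tensor_def prod_nonneg)
  also have "\<dots> \<le> ennreal (1/D\<^sup>2) * (\<Sum>i<n. ennreal m)"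
    using deriv_tower_measurable[OF F] nonneg mass moment
    by (intro mult_left_mono sum_mono tensor_moment) auto
  also have "\<dots> = ennreal (real n * m / D\<^sup>2)"
    using \<open>m \<ge> 0\<close> by (simp add: ennreal_mult[symmetric] ennreal_of_nat_eq_real_of_nat)
  finally show ?thesis .
qed

text \<open>For each dimension n and bound C the density rho = tensor (dilate c Phi) n 0 with
  c = C / (K0 * sqrt n) has all required properties with the constant K0^2 * M0: the
  directional derivative bound becomes (c * K0 * sqrt n)^k = C^k, and the tail bound
  n * (M0 / c^2) / D^2 equals K0^2 * M0 * (n / (C D))^2.\<close>

lemma density_exists:
  fixes n :: nat and C :: real
  assumes n: "n \<ge> 1" and C: "C > 0"
  shows "\<exists>\<rho>. smooth_n n \<rho> \<and> (\<forall>x\<in>Rn n. \<rho> x \<ge> 0) \<and> (\<integral>\<^sup>+ x. ennreal (\<rho> x) \<partial>lebesgue_n n) = 1 \<and>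
    (\<forall>v\<in>Rn n. euclid_norm n v = 1 \<longrightarrow> (\<forall>k::nat.
       (\<integral>\<^sup>+ x. ennreal \<bar>dir_deriv_pow v k \<rho> x\<bar> \<partial>lebesgue_n n) \<le> ennreal (C ^ k))) \<and>
    (\<forall>D::real. D > 0 \<longrightarrow>
       (\<integral>\<^sup>+ x. ennreal (\<rho> x) * indicator {y. euclid_norm n y > D} x \<partial>lebesgue_n n)
         \<le> ennreal (K0\<^sup>2 * M0 * (real n / (C * D))\<^sup>2))"
proof -
  define c where "c = C / (K0 * sqrt (real n))"
  have c: "c > 0" and cK: "c * K0 * sqrt (real n) = C"
    using n C K0_pos by (auto simp: c_def)
  have cK0: "c * K0 \<ge> 0" using c K0_pos by simp
  note F = profile_tower[of c] and F_nonneg = profile_nonneg[OF c]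
    and F_mass = profile_integral[OF c] and F_L1 = profile_L1[OF c]
  define \<rho> where "\<rho> = tensor (dilate c Phi) n (\<lambda>_. 0)"
  have "smooth_n n \<rho>" unfolding \<rho>_def by (rule smooth_tensor[OF F])
  moreover have "\<rho> x \<ge> 0" for x
    unfolding \<rho>_def tensor_def using F_nonneg by (intro prod_nonneg) auto
  moreover have "(\<integral>\<^sup>+ x. ennreal (\<rho> x) \<partial>lebesgue_n n) = 1"
    unfolding \<rho>_def using deriv_tower_measurable[OF F] F_nonneg F_mass by (rule tensor_integral)
  moreover have "(\<integral>\<^sup>+ x. ennreal \<bar>dir_deriv_pow v k \<rho> x\<bar> \<partial>lebesgue_n n) \<le> ennreal (C ^ k)"
    if "euclid_norm n v = 1" for v k
    using dir_deriv_pow_tensor_L1_unit[OF F cK0 F_L1 that] cK by (simp add: \<rho>_def)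
  moreover have "(\<integral>\<^sup>+ x. ennreal (\<rho> x) * indicator {y. euclid_norm n y > D} x \<partial>lebesgue_n n)
      \<le> ennreal (K0\<^sup>2 * M0 * (real n / (C * D))\<^sup>2)" if "D > 0" for D
  proof -
    have "(\<integral>\<^sup>+ x. ennreal (\<rho> x) * indicator {y. euclid_norm n y > D} x \<partial>lebesgue_n n)
        \<le> ennreal (real n * (M0 / c\<^sup>2) / D\<^sup>2)"
      unfolding \<rho>_def using M0_ge_1 c that
      by (intro tensor_tail[OF F F_nonneg F_mass profile_moment[OF c]]) auto
    also have "real n * (M0 / c\<^sup>2) / D\<^sup>2 = K0\<^sup>2 * M0 * (real n / (C * D))\<^sup>2"
      unfolding cK[symmetric] using n K0_pos c that by (simp add: field_simps power2_eq_square)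
    finally show ?thesis .
  qed
  ultimately show ?thesis by blast
qed

theorem lemma5:
  shows "\<exists>A::real. A > 0 \<and>
    (\<forall>(n::nat) (C::real). n \<ge> 1 \<longrightarrow> C > 0 \<longrightarrow>
      (\<exists>\<rho> :: (nat \<Rightarrow> real) \<Rightarrow> real.
         smooth_n n \<rho> \<and>
         (\<forall>x\<in>Rn n. \<rho> x \<ge> 0) \<and>
         (\<integral>\<^sup>+ x. ennreal (\<rho> x) \<partial>lebesgue_n n) = 1 \<and>
         (\<forall>v\<in>Rn n. euclid_norm n v = 1 \<longrightarrow> (\<forall>k::nat.
            (\<integral>\<^sup>+ x. ennreal \<bar>dir_deriv_pow v k \<rho> x\<bar> \<partial>lebesgue_n n) \<le> ennreal (C ^ k))) \<and>
         (\<forall>D::real. D > 0 \<longrightarrow>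
            (\<integral>\<^sup>+ x. ennreal (\<rho> x) * indicator {y. euclid_norm n y > D} x \<partial>lebesgue_n n)
              \<le> ennreal (A * (real n / (C * D))\<^sup>2))))"
proof (intro exI[of _ "K0\<^sup>2 * M0"] conjI allI impI)
  show "K0\<^sup>2 * M0 > 0" using K0_pos M0_ge_1 by simp
qed (rule density_exists)

end
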